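(* Let $(X,(\cdot,\cdot|\cdot))$ be a 2-inner product space over $\mathbb{K}\in\{\mathbb{R},\mathbb{C}\}$, let $n$ be a positive integer, let $x,y_1,\dots,y_n,z\in X$ and $c_1,\dots,c_n\in\mathbb{K}$. Define the three quantities $A_1=\max_{1\le i\le n}|c_i|^2\sum_{i=1}^n\|y_i|z\|^2$; $A_2(\alpha)=\big(\sum_{i=1}^n|c_i|^{2\alpha}\big)^{1/\alpha}\big(\sum_{i=1}^n\|y_i|z\|^{2\beta}\big)^{1/\beta}$ for $\alpha>1$, $\frac1\alpha+\frac1\beta=1$; $A_3=\sum_{i=1}^n|c_i|^2\max_{1\le i\le n}\|y_i|z\|^2$; and $B_1=\max_{1\le i\ne j\le n}|c_ic_j|\sum_{1\le i\ne j\le n}|(y_i,y_j|z)|$; $B_2(\gamma)=\Big[\big(\sum_{i=1}^n|c_i|^{\gamma}\big)^2-\sum_{i=1}^n|c_i|^{2\gamma}\Big]^{1/\gamma}\big(\sum_{1\le i\ne j\le n}|(y_i,y_j|z)|^{\delta}\big)^{1/\delta}$ for $\gamma>1$, $\frac1\gamma+\frac1\delta=1$; $B_3=\Big[\big(\sum_{i=1}^n|c_i|\big)^2-\sum_{i=1}^n|c_i|^2\Big]\max_{1\le i\ne j\le n}|(y_i,y_j|z)|$. Then for every choice of $A\in\{A_1,A_2(\alpha),A_3\}$ and $B\in\{B_1,B_2(\gamma),B_3\}$ (with any admissible $\alpha,\gamma$), \[ \Big|\sum_{i=1}^n c_i(x,y_i|z)\Big|^2\le \|x|z\|^2\,(A+B).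 \]
   Context: A 2-inner product on a linear space $X$ of dimension greater than $1$ over $\mathbb{K}$ ($\mathbb{K}=\mathbb{R}$ or $\mathbb{C}$) is a function $(\cdot,\cdot|\cdot):X\times X\times X\to\mathbb{K}$ such that for all $x,x',y,z\in X$ and $\alpha\in\mathbb{K}$: (i) $(x,x|z)\ge 0$, and $(x,x|z)=0$ iff $x$ and $z$ are linearly dependent; (ii) $(x,x|z)=(z,z|x)$; (iii) $(y,x|z)=\overline{(x,y|z)}$; (iv) $(\alpha x,y|z)=\alpha(x,y|z)$; (v) $(x+x',y|z)=(x,y|z)+(x',y|z)$. The associated 2-norm is $\|x|z\|=\sqrt{(x,x|z)}$. Sums and maxima indexed by $1\le i\ne j\le n$ run over all ordered pairs $(i,j)$ with $i,j\in\{1,\dots,n\}$, $i\ne j$. *)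

theory Defs
  imports "HOL-Analysis.Analysis"
begin

text \<open>Scalars: a field K which is either the reals (embedded in the complex numbers)
  or the complex numbers.  X is an additive abelian group carrying a K-scalar
  multiplication scal (only scalars in K are meaningful); the 2-inner product
  takes values in K.\<close>

definition lin_dep2 :: "complex set \<Rightarrow> (complex \<Rightarrow> 'a::ab_group_add \<Rightarrow> 'a) \<Rightarrow> 'a \<Rightarrow> 'a \<Rightarrow> bool" where
  "lin_dep2 K scal x z \<longleftrightarrow>
     (\<exists>a\<in>K. \<exists>b\<in>K. (a \<noteq> 0 \<or> b \<noteq> 0) \<and> scal a x + scal b z = 0)"

definition vector_space_K :: "complex set \<Rightarrow> (complex \<Rightarrow> 'a::ab_group_add \<Rightarrow> 'a) \<Rightarrow> bool" where
  "vector_space_K K scal \<longleftrightarrow>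
     (K = \<real> \<or> K = UNIV) \<and>
     (\<forall>a\<in>K. \<forall>x y. scal a (x + y) = scal a x + scal a y) \<and>
     (\<forall>a\<in>K. \<forall>b\<in>K. \<forall>x. scal (a + b) x = scal a x + scal b x) \<and>
     (\<forall>a\<in>K. \<forall>b\<in>K. \<forall>x. scal (a * b) x = scal a (scal b x)) \<and>
     (\<forall>x. scal 1 x = x)"

definition two_inner_product_space ::
  "complex set \<Rightarrow> (complex \<Rightarrow> 'a::ab_group_add \<Rightarrow> 'a) \<Rightarrow> ('a \<Rightarrow> 'a \<Rightarrow> 'a \<Rightarrow> complex) \<Rightarrow> bool" where
  "two_inner_product_space K scal ip \<longleftrightarrow>
     vector_space_K K scal \<and>
     (\<exists>u v. \<not> lin_dep2 K scal u v) \<and>   \<comment> \<open>dimension greater than 1\<close>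
     (\<forall>x y z. ip x y z \<in> K) \<and>
     (\<forall>x z. Im (ip x x z) = 0 \<and> Re (ip x x z) \<ge> 0) \<and>
     (\<forall>x z. ip x x z = 0 \<longleftrightarrow> lin_dep2 K scal x z) \<and>
     (\<forall>x z. ip x x z = ip z z x) \<and>
     (\<forall>x y z. ip y x z = cnj (ip x y z)) \<and>
     (\<forall>\<alpha>\<in>K. \<forall>x y z. ip (scal \<alpha> x) y z = \<alpha> * ip x y z) \<and>
     (\<forall>x x' y z. ip (x + x') y z = ip x y z + ip x' y z)"

definition norm2sq :: "('a \<Rightarrow> 'a \<Rightarrow> 'a \<Rightarrow> complex) \<Rightarrow> 'a \<Rightarrow> 'a \<Rightarrow> real" where
  "norm2sq ip x z = Re (ip x x z)"

definition offdiag :: "nat \<Rightarrow> (nat \<times> nat) set" where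
  "offdiag n = {(i, j). i \<in> {1..n} \<and> j \<in> {1..n} \<and> i \<noteq> j}"

definition A1 :: "('a \<Rightarrow> 'a \<Rightarrow> 'a \<Rightarrow> complex) \<Rightarrow> nat \<Rightarrow> (nat \<Rightarrow> complex) \<Rightarrow> (nat \<Rightarrow> 'a) \<Rightarrow> 'a \<Rightarrow> real" where
  "A1 ip n c y z = Max ((\<lambda>i. (cmod (c i))\<^sup>2) ` {1..n}) * (\<Sum>i=1..n. norm2sq ip (y i) z)"

definition A2 :: "('a \<Rightarrow> 'a \<Rightarrow> 'a \<Rightarrow> complex) \<Rightarrow> nat \<Rightarrow> (nat \<Rightarrow> complex) \<Rightarrow> (nat \<Rightarrow> 'a) \<Rightarrow> 'a \<Rightarrow> real \<Rightarrow> real \<Rightarrow> real" where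
  "A2 ip n c y z \<alpha> \<beta> =
     (\<Sum>i=1..n. cmod (c i) powr (2 * \<alpha>)) powr (1 / \<alpha>) *
     (\<Sum>i=1..n. norm2sq ip (y i) z powr \<beta>) powr (1 / \<beta>)"

definition A3 :: "('a \<Rightarrow> 'a \<Rightarrow> 'a \<Rightarrow> complex) \<Rightarrow> nat \<Rightarrow> (nat \<Rightarrow> complex) \<Rightarrow> (nat \<Rightarrow> 'a) \<Rightarrow> 'a \<Rightarrow> real" where
  "A3 ip n c y z = (\<Sum>i=1..n. (cmod (c i))\<^sup>2) * Max ((\<lambda>i. norm2sq ip (y i) z) ` {1..n})"

definition B1 :: "('a \<Rightarrow> 'a \<Rightarrow> 'a \<Rightarrow> complex) \<Rightarrow> nat \<Rightarrow> (nat \<Rightarrow> complex) \<Rightarrow> (nat \<Rightarrow> 'a) \<Rightarrow> 'a \<Rightarrow> real" where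
  "B1 ip n c y z = Max ((\<lambda>(i, j). cmod (c i * c j)) ` offdiag n) *
     (\<Sum>(i, j)\<in>offdiag n. cmod (ip (y i) (y j) z))"

definition B2 :: "('a \<Rightarrow> 'a \<Rightarrow> 'a \<Rightarrow> complex) \<Rightarrow> nat \<Rightarrow> (nat \<Rightarrow> complex) \<Rightarrow> (nat \<Rightarrow> 'a) \<Rightarrow> 'a \<Rightarrow> real \<Rightarrow> real \<Rightarrow> real" where
  "B2 ip n c y z \<gamma> \<delta> =
     ((\<Sum>i=1..n. cmod (c i) powr \<gamma>)\<^sup>2 - (\<Sum>i=1..n. cmod (c i) powr (2 * \<gamma>))) powr (1 / \<gamma>) *
     (\<Sum>(i, j)\<in>offdiag n. cmod (ip (y i) (y j) z) powr \<delta>) powr (1 / \<delta>)"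

definition B3 :: "('a \<Rightarrow> 'a \<Rightarrow> 'a \<Rightarrow> complex) \<Rightarrow> nat \<Rightarrow> (nat \<Rightarrow> complex) \<Rightarrow> (nat \<Rightarrow> 'a) \<Rightarrow> 'a \<Rightarrow> real" where
  "B3 ip n c y z = ((\<Sum>i=1..n. cmod (c i))\<^sup>2 - (\<Sum>i=1..n. (cmod (c i))\<^sup>2)) *
     Max ((\<lambda>(i, j). cmod (ip (y i) (y j) z)) ` offdiag n)"

end

theory Submission
  imports Defs
begin

(* Put w = \<Sum>i. cnj (c i) y\<^sub>i, so that (x, w|z) = \<Sum>i. c\<^sub>i (x, y\<^sub>i|z). The Cauchy-Schwarz
   inequality for the 2-inner product, obtained from the nonnegativity of
   \<parallel>x - t(x,w|z) w|z\<parallel>^2 as a quadratic in the real parameter t, bounds the left-hand side by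
   \<parallel>x|z\<parallel>^2 \<parallel>w|z\<parallel>^2. Expanding \<parallel>w|z\<parallel>^2 and applying the triangle inequality splits it into
   a diagonal part \<Sum>i. |c\<^sub>i|^2 \<parallel>y\<^sub>i|z\<parallel>^2 and an off-diagonal part
   \<Sum>i\<noteq>j. |c\<^sub>i c\<^sub>j| |(y\<^sub>i, y\<^sub>j|z)|. Each A dominates the first and each B the second, either by
   pulling out a maximum or by Hoelder's inequality; for the off-diagonal weights one uses
   \<Sum>i\<noteq>j. a\<^sub>i a\<^sub>j = (\<Sum>i. a\<^sub>i)^2 - \<Sum>i. a\<^sub>i^2. *)

lemma conjugate_exponent_gt_1:
  fixes p q :: real
  assumes "p > 1" and "1 / p + 1 / q = 1"
  shows "q > 1"
proof -
  have "1 / q = 1 - 1 / p" using assms(2) by simp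
  moreover have "0 < 1 - 1 / p" "1 - 1 / p < 1" using assms(1) by auto
  ultimately have "0 < 1 / q" "1 / q < 1" by auto
  then show ?thesis by (simp add: field_simps split: if_splits)
qed

lemma Holder_ineq_sum:
  fixes a b :: "'i \<Rightarrow> real"
  assumes "finite I" and a: "\<And>i. i \<in> I \<Longrightarrow> a i \<ge> 0" and b: "\<And>i. i \<in> I \<Longrightarrow> b i \<ge> 0"
    and p: "p > 1" and pq: "1 / p + 1 / q = 1"
  shows "(\<Sum>i\<in>I. a i * b i) \<le> (\<Sum>i\<in>I. a i powr p) powr (1 / p) * (\<Sum>i\<in>I. b i powr q) powr (1 / q)"
proof -
  have q: "q > 1" using p pq by (rule conjugate_exponent_gt_1)
  define P where "P = (\<Sum>i\<in>I. a i powr p)"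
  define Q where "Q = (\<Sum>i\<in>I. b i powr q)"
  show ?thesis
  proof (cases "P = 0 \<or> Q = 0")
    case True
    then have "\<forall>i\<in>I. a i = 0 \<or> b i = 0"
      unfolding P_def Q_def using \<open>finite I\<close> a b by (auto simp: sum_nonneg_eq_0_iff)
    then show ?thesis by (simp add: sum.neutral)
  next
    case False
    moreover have "P \<ge> 0" "Q \<ge> 0" unfolding P_def Q_def by (auto intro: sum_nonneg)
    ultimately have "P > 0" "Q > 0" by auto
    define s where "s = P powr (1 / p)"
    define t where "t = Q powr (1 / q)"
    have st: "s > 0" "t > 0" using \<open>P > 0\<close> \<open>Q > 0\<close> by (auto simp: s_def t_def)
    have "s powr p = P" "t powr q = Q"
      using \<open>P > 0\<close> \<open>Q > 0\<close> p q by (simp_all add: s_def t_def powr_powr)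
    have "(a i / s) * (b i / t) \<le> a i powr p / (P * p) + b i powr q / (Q * q)" if "i \<in> I" for i
    proof -
      have "(a i / s) * (b i / t) \<le> (a i / s) powr p / p + (b i / t) powr q / q"
        by (rule Youngs_inequality) (use p q pq a b that st in auto)
      also have "\<dots> = a i powr p / (P * p) + b i powr q / (Q * q)"
        using a[OF that] b[OF that] st \<open>s powr p = P\<close> \<open>t powr q = Q\<close> by (simp add: powr_divide)
      finally show ?thesis .
    qed
    then have "(\<Sum>i\<in>I. (a i / s) * (b i / t)) \<le> (\<Sum>i\<in>I. a i powr p / (P * p) + b i powr q / (Q * q))"
      by (rule sum_mono)
    also have "\<dots> = P / (P * p) + Q / (Q * q)"
      by (simp add: sum.distrib P_def Q_def sum_divide_distrib)
    also have "\<dots> = 1" using \<open>P > 0\<close> \<open>Q > 0\<close> pq by simp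
    finally have "(\<Sum>i\<in>I. a i * b i) / (s * t) \<le> 1"
      by (simp add: sum_divide_distrib)
    then show ?thesis using st by (simp add: s_def t_def P_def Q_def divide_le_eq)
  qed
qed

lemma sum_mult_le_Max_mult_sum:
  fixes f g :: "'i \<Rightarrow> real"
  assumes "finite I" and "\<And>i. i \<in> I \<Longrightarrow> g i \<ge> 0"
  shows "(\<Sum>i\<in>I. f i * g i) \<le> Max (f ` I) * (\<Sum>i\<in>I. g i)"
  unfolding sum_distrib_left
  by (rule sum_mono, rule mult_right_mono) (use assms in auto)

lemma discriminant_bound:
  fixes a b m :: real
  assumes "b \<ge> 0" "m \<ge> 0" and quadratic_nonneg: "\<And>t. 0 \<le> a - 2 * t * m + t\<^sup>2 * m * b"
  shows "m \<le> a * b"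
proof (cases "b = 0")
  case True
  then have "m * (a + 1) \<le> a * m"
    using quadratic_nonneg[of "(a + 1) / (2 * m)"] by (cases "m = 0") (simp_all add: field_simps)
  then show ?thesis using \<open>m \<ge> 0\<close> True by (simp add: algebra_simps)
next
  case False
  then have "0 \<le> a - m / b"
    using quadratic_nonneg[of "1 / b"] \<open>b \<ge> 0\<close> by (simp add: power2_eq_square field_simps)
  then show ?thesis using False \<open>b \<ge> 0\<close> by (simp add: field_simps)
qed

lemma offdiag_finite: "finite (offdiag n)"
  by (rule finite_subset[of _ "{1..n} \<times> {1..n}"]) (auto simp: offdiag_def)

lemma sum_sum_eq_diag_plus_offdiag:
  fixes f :: "nat \<Rightarrow> nat \<Rightarrow> 'b::comm_monoid_add"
  shows "(\<Sum>i=1..n. \<Sum>j=1..n. f i j) = (\<Sum>i=1..n. f i i) + (\<Sum>(i, j)\<in>offdiag n. f i j)"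
proof -
  have "{1..n} \<times> {1..n} = (\<lambda>i. (i, i)) ` {1..n} \<union> offdiag n"
    by (auto simp: offdiag_def)
  moreover have "(\<lambda>i. (i, i)) ` {1..n} \<inter> offdiag n = {}"
    by (auto simp: offdiag_def)
  ultimately have "(\<Sum>(i, j)\<in>{1..n} \<times> {1..n}. f i j)
      = (\<Sum>(i, j)\<in>(\<lambda>i. (i, i)) ` {1..n}. f i j) + (\<Sum>(i, j)\<in>offdiag n. f i j)"
    by (simp add: sum.union_disjoint offdiag_finite)
  also have "(\<Sum>(i, j)\<in>(\<lambda>i. (i, i)) ` {1..n}. f i j) = (\<Sum>i=1..n. f i i)"
    by (subst sum.reindex) (auto simp: inj_on_def)
  finally show ?thesis by (simp add: sum.cartesian_product)
qed

lemma sum_offdiag_mult: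
  fixes a :: "nat \<Rightarrow> 'b::comm_ring_1"
  shows "(\<Sum>(i, j)\<in>offdiag n. a i * a j) = (\<Sum>i=1..n. a i)\<^sup>2 - (\<Sum>i=1..n. (a i)\<^sup>2)"
  using sum_sum_eq_diag_plus_offdiag[of "\<lambda>i j. a i * a j" n]
  by (simp add: power2_eq_square sum_product)

context
  fixes K :: "complex set" and scal :: "complex \<Rightarrow> 'a::ab_group_add \<Rightarrow> 'a"
    and ip :: "'a \<Rightarrow> 'a \<Rightarrow> 'a \<Rightarrow> complex"
  assumes two_ips: "two_inner_product_space K scal ip"
begin

lemma K_cases: "K = \<real> \<or> K = UNIV"
  using two_ips unfolding two_inner_product_space_def vector_space_K_def by blast

lemma cnj_in_K: "a \<in> K \<Longrightarrow> cnj a \<in> K"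
  using K_cases by (auto simp: Reals_cnj_iff)

lemma real_mult_in_K: "a \<in> K \<Longrightarrow> complex_of_real t * a \<in> K"
  using K_cases by auto

lemma ip_in_K: "ip u v z \<in> K"
  using two_ips unfolding two_inner_product_space_def by blast

lemma ip_add_left: "ip (u + v) w z = ip u w z + ip v w z"
  using two_ips unfolding two_inner_product_space_def by blast

lemma ip_scal_left: "a \<in> K \<Longrightarrow> ip (scal a u) w z = a * ip u w z"
  using two_ips unfolding two_inner_product_space_def by blast

lemma ip_commute_cnj: "ip v u z = cnj (ip u v z)"
  using two_ips unfolding two_inner_product_space_def by blast

lemma ip_self_real_nonneg: "Im (ip u u z) = 0 \<and> Re (ip u u z) \<ge> 0"
  using two_ips unfolding two_inner_product_space_def by blast

lemma ip_self_eq_norm2sq: "ip u u z = complex_of_real (norm2sq ip u z)"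
  using ip_self_real_nonneg[of u z] by (simp add: norm2sq_def complex_eq_iff)

lemma norm2sq_nonneg: "norm2sq ip u z \<ge> 0"
  using ip_self_real_nonneg[of u z] by (simp add: norm2sq_def)

lemma cmod_ip_self: "cmod (ip u u z) = norm2sq ip u z"
  by (simp add: ip_self_eq_norm2sq norm2sq_nonneg)

lemma ip_add_right: "ip w (u + v) z = ip w u z + ip w v z"
  by (metis ip_add_left ip_commute_cnj complex_cnj_add)

lemma ip_scal_right: "a \<in> K \<Longrightarrow> ip w (scal a u) z = cnj a * ip w u z"
  by (metis ip_scal_left ip_commute_cnj complex_cnj_mult)

lemma ip_sum_left: "ip (\<Sum>i\<in>S. f i) w z = (\<Sum>i\<in>S. ip (f i) w z)"
proof -
  have "ip 0 w z = 0" using ip_add_left[of 0 0 w z] by simp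
  then show ?thesis by (induction S rule: infinite_finite_induct) (simp_all add: ip_add_left)
qed

lemma ip_sum_right: "ip w (\<Sum>i\<in>S. f i) z = (\<Sum>i\<in>S. ip w (f i) z)"
  by (subst ip_commute_cnj) (simp add: ip_sum_left ip_commute_cnj[of w])

lemma two_ip_Cauchy_Schwarz: "(cmod (ip x w z))\<^sup>2 \<le> norm2sq ip x z * norm2sq ip w z"
proof (rule discriminant_bound)
  show "norm2sq ip w z \<ge> 0" "(cmod (ip x w z))\<^sup>2 \<ge> 0" by (simp_all add: norm2sq_nonneg)
  fix t :: real
  define \<mu> where "\<mu> = ip x w z"
  define s where "s = - (complex_of_real t * \<mu>)"
  have "s \<in> K"
    unfolding s_def \<mu>_def using real_mult_in_K[OF ip_in_K, of "- t"] by simp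
  have "ip (x + scal s w) (x + scal s w) z
      = ip x x z + cnj s * \<mu> + s * cnj \<mu> + s * cnj s * ip w w z"
    using \<open>s \<in> K\<close>
    by (simp add: ip_add_left ip_add_right ip_scal_left ip_scal_right \<mu>_def ip_commute_cnj[of w x])
  also have "Re \<dots> = norm2sq ip x z - 2 * t * (cmod \<mu>)\<^sup>2 + t\<^sup>2 * (cmod \<mu>)\<^sup>2 * norm2sq ip w z"
    unfolding ip_self_eq_norm2sq s_def cmod_power2
    by (simp add: power2_eq_square algebra_simps)
  finally show "0 \<le> norm2sq ip x z - 2 * t * (cmod (ip x w z))\<^sup>2
      + t\<^sup>2 * (cmod (ip x w z))\<^sup>2 * norm2sq ip w z"
    using norm2sq_nonneg[of "x + scal s w" z] by (simp add: norm2sq_def \<mu>_def)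
qed

lemma norm2sq_sum_scal_le:
  assumes "\<forall>i\<in>{1..n}. a i \<in> K"
  shows "norm2sq ip (\<Sum>i=1..n. scal (a i) (y i)) z
    \<le> (\<Sum>i=1..n. (cmod (a i))\<^sup>2 * norm2sq ip (y i) z)
      + (\<Sum>(i, j)\<in>offdiag n. cmod (a i) * cmod (a j) * cmod (ip (y i) (y j) z))"
proof -
  let ?w = "\<Sum>i=1..n. scal (a i) (y i)"
  have "ip ?w ?w z = (\<Sum>i=1..n. \<Sum>j=1..n. ip (scal (a i) (y i)) (scal (a j) (y j)) z)"
    by (simp only: ip_sum_left) (simp only: ip_sum_right)
  also have "\<dots> = (\<Sum>i=1..n. \<Sum>j=1..n. a i * cnj (a j) * ip (y i) (y j) z)"
    using assms by (intro sum.cong refl) (simp add: ip_scal_left ip_scal_right)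
  finally have ww: "ip ?w ?w z = (\<Sum>i=1..n. \<Sum>j=1..n. a i * cnj (a j) * ip (y i) (y j) z)" .
  have "norm2sq ip ?w z \<le> cmod (ip ?w ?w z)"
    unfolding norm2sq_def by (rule complex_Re_le_cmod)
  also have "\<dots> \<le> (\<Sum>i=1..n. \<Sum>j=1..n. cmod (a i) * cmod (a j) * cmod (ip (y i) (y j) z))"
    unfolding ww
    by (rule order_trans[OF norm_sum sum_mono], rule order_trans[OF norm_sum sum_mono])
      (simp add: norm_mult)
  also have "\<dots> = (\<Sum>i=1..n. (cmod (a i))\<^sup>2 * norm2sq ip (y i) z)
      + (\<Sum>(i, j)\<in>offdiag n. cmod (a i) * cmod (a j) * cmod (ip (y i) (y j) z))"
    unfolding sum_sum_eq_diag_plus_offdiag by (simp add: cmod_ip_self power2_eq_square)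
  finally show ?thesis .
qed

lemma cmod_sum_ip_le:
  assumes "\<forall>i\<in>{1..n}. c i \<in> K"
  shows "(cmod (\<Sum>i=1..n. c i * ip x (y i) z))\<^sup>2 \<le> norm2sq ip x z *
     ((\<Sum>i=1..n. (cmod (c i))\<^sup>2 * norm2sq ip (y i) z)
      + (\<Sum>(i, j)\<in>offdiag n. cmod (c i) * cmod (c j) * cmod (ip (y i) (y j) z)))"
proof -
  let ?w = "\<Sum>i=1..n. scal (cnj (c i)) (y i)"
  have cnj_c: "\<forall>i\<in>{1..n}. cnj (c i) \<in> K" using assms by (simp add: cnj_in_K)
  then have "ip x ?w z = (\<Sum>i=1..n. c i * ip x (y i) z)"
    by (simp add: ip_sum_right ip_scal_right)
  then have "(cmod (\<Sum>i=1..n. c i * ip x (y i) z))\<^sup>2 \<le> norm2sq ip x z * norm2sq ip ?w z"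
    using two_ip_Cauchy_Schwarz[of x ?w z] by simp
  also have "\<dots> \<le> norm2sq ip x z * ((\<Sum>i=1..n. (cmod (c i))\<^sup>2 * norm2sq ip (y i) z)
      + (\<Sum>(i, j)\<in>offdiag n. cmod (c i) * cmod (c j) * cmod (ip (y i) (y j) z)))"
    using norm2sq_sum_scal_le[OF cnj_c, of y z] by (simp add: mult_left_mono norm2sq_nonneg)
  finally show ?thesis .
qed

lemma diagonal_le_A:
  assumes "\<alpha> > 1" and "1 / \<alpha> + 1 / \<beta> = 1"
    and "A \<in> {A1 ip n c y z, A2 ip n c y z \<alpha> \<beta>, A3 ip n c y z}"
  shows "(\<Sum>i=1..n. (cmod (c i))\<^sup>2 * norm2sq ip (y i) z) \<le> A"
proof -
  let ?D = "\<Sum>i=1..n. (cmod (c i))\<^sup>2 * norm2sq ip (y i) z"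
  have "?D \<le> A1 ip n c y z"
    unfolding A1_def by (rule sum_mult_le_Max_mult_sum) (simp_all add: norm2sq_nonneg)
  moreover have "?D \<le> A3 ip n c y z"
    using sum_mult_le_Max_mult_sum[where I = "{1..n}" and f = "\<lambda>i. norm2sq ip (y i) z"
        and g = "\<lambda>i. (cmod (c i))\<^sup>2"]
    by (simp add: A3_def mult.commute)
  moreover have "?D \<le> (\<Sum>i=1..n. ((cmod (c i))\<^sup>2) powr \<alpha>) powr (1 / \<alpha>)
      * (\<Sum>i=1..n. norm2sq ip (y i) z powr \<beta>) powr (1 / \<beta>)"
    by (rule Holder_ineq_sum) (use assms(1,2) in \<open>simp_all add: norm2sq_nonneg\<close>)
  then have "?D \<le> A2 ip n c y z \<alpha> \<beta>"
    by (simp add: A2_def powr_powr flip: powr_numeral)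
  ultimately show ?thesis using assms(3) by blast
qed

lemma offdiagonal_le_B:
  assumes "\<gamma> > 1" and "1 / \<gamma> + 1 / \<delta> = 1"
    and "B \<in> {B1 ip n c y z, B2 ip n c y z \<gamma> \<delta>, B3 ip n c y z}"
  shows "(\<Sum>(i, j)\<in>offdiag n. cmod (c i) * cmod (c j) * cmod (ip (y i) (y j) z)) \<le> B"
proof -
  let ?O = "\<Sum>(i, j)\<in>offdiag n. cmod (c i) * cmod (c j) * cmod (ip (y i) (y j) z)"
  have "?O \<le> B1 ip n c y z"
    using sum_mult_le_Max_mult_sum[OF offdiag_finite, where f = "\<lambda>(i, j). cmod (c i * c j)"
        and g = "\<lambda>(i, j). cmod (ip (y i) (y j) z)"]
    by (simp add: B1_def split_def norm_mult)
  moreover have "?O \<le> (\<Sum>(i, j)\<in>offdiag n. cmod (c i) * cmod (c j))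
      * Max ((\<lambda>(i, j). cmod (ip (y i) (y j) z)) ` offdiag n)"
    using sum_mult_le_Max_mult_sum[OF offdiag_finite, where g = "\<lambda>(i, j). cmod (c i) * cmod (c j)"
        and f = "\<lambda>(i, j). cmod (ip (y i) (y j) z)"]
    by (simp add: split_def mult.commute)
  then have "?O \<le> B3 ip n c y z"
    by (simp add: B3_def sum_offdiag_mult)
  moreover have "?O \<le> (\<Sum>(i, j)\<in>offdiag n. (cmod (c i) * cmod (c j)) powr \<gamma>) powr (1 / \<gamma>)
      * (\<Sum>(i, j)\<in>offdiag n. cmod (ip (y i) (y j) z) powr \<delta>) powr (1 / \<delta>)"
    using Holder_ineq_sum[OF offdiag_finite, where a = "\<lambda>(i, j). cmod (c i) * cmod (c j)"
        and b = "\<lambda>(i, j). cmod (ip (y i) (y j) z)", OF _ _ assms(1,2)]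
    by (simp add: split_def)
  moreover have "(\<Sum>(i, j)\<in>offdiag n. (cmod (c i) * cmod (c j)) powr \<gamma>)
      = (\<Sum>i=1..n. cmod (c i) powr \<gamma>)\<^sup>2 - (\<Sum>i=1..n. cmod (c i) powr (2 * \<gamma>))"
    by (simp add: powr_mult sum_offdiag_mult powr_powr mult.commute flip: powr_numeral)
  ultimately show ?thesis using assms(3) by (auto simp: B2_def)
qed

end

theorem theorem3p1:
  fixes K :: "complex set" and scal :: "complex \<Rightarrow> 'a::ab_group_add \<Rightarrow> 'a"
    and ip :: "'a \<Rightarrow> 'a \<Rightarrow> 'a \<Rightarrow> complex"
    and n :: nat and x z :: 'a and y :: "nat \<Rightarrow> 'a" and c :: "nat \<Rightarrow> complex"
    and \<alpha> \<beta> \<gamma> \<delta> A B :: real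
  assumes "two_inner_product_space K scal ip"
    and "n \<ge> 1"
    and "\<forall>i\<in>{1..n}. c i \<in> K"
    and "\<alpha> > 1" and "1 / \<alpha> + 1 / \<beta> = 1"
    and "\<gamma> > 1" and "1 / \<gamma> + 1 / \<delta> = 1"
    and "A \<in> {A1 ip n c y z, A2 ip n c y z \<alpha> \<beta>, A3 ip n c y z}"
    and "B \<in> {B1 ip n c y z, B2 ip n c y z \<gamma> \<delta>, B3 ip n c y z}"
  shows "(cmod (\<Sum>i=1..n. c i * ip x (y i) z))\<^sup>2 \<le> norm2sq ip x z * (A + B)"
proof -
  note two_ips = assms(1)
  have "(\<Sum>i=1..n. (cmod (c i))\<^sup>2 * norm2sq ip (y i) z)
      + (\<Sum>(i, j)\<in>offdiag n. cmod (c i) * cmod (c j) * cmod (ip (y i) (y j) z)) \<le> A + B"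
    using diagonal_le_A[OF two_ips assms(4,5,8)] offdiagonal_le_B[OF two_ips assms(6,7,9)]
    by (rule add_mono)
  then show ?thesis
    using cmod_sum_ip_le[OF two_ips assms(3), of x y z] norm2sq_nonneg[OF two_ips, of x z]
    by (meson mult_left_mono order_trans)
qed

end
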